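(* Let $k\in\mathbb{Z}$ and $\imath\in\mathbb{Z}_{>1}$. The rational polygon $\mathrm{conv}((0,0),(k,\imath),(k+2/5,\imath))$ is canonical if and only if the rational polygon $\mathrm{conv}((0,0),(k,\imath),(k+1/3,\imath))$ is canonical.
   Context: For rationals $a<b$ and $\imath\in\mathbb{Z}_{>1}$, the polygon $\mathrm{conv}((0,0),(a,\imath),(b,\imath))$ is called canonical if every lattice point $p\neq(0,0)$ in it satisfies $p_2=\imath$. *)

theory Defs
  imports "HOL-Analysis.Analysis"
begin

definition lattice_point :: "real \<times> real \<Rightarrow> bool" where
  "lattice_point p \<longleftrightarrow> fst p \<in> \<int> \<and> snd p \<in> \<int>"

text \<open>For rationals a < b and an integer i > 1, conv((0,0),(a,i),(b,i)) is canonical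
  iff every lattice point p \<noteq> (0,0) in it satisfies p_2 = i.\<close>
definition canonical :: "rat \<Rightarrow> rat \<Rightarrow> int \<Rightarrow> bool" where
  "canonical a b i \<longleftrightarrow>
     (\<forall>p \<in> convex hull {(0,0), (of_rat a, of_int i), (of_rat b, of_int i)}.
        lattice_point p \<and> p \<noteq> (0,0) \<longrightarrow> snd p = of_int i)"

end

theory Submission
  imports Defs
begin

text \<open>A lattice point (m, j) of the triangle with 0 < j < i lies on the segment at height j,
  which runs from k j / i to (k + w) j / i. So canonicity only asks whether, for some such j,
  the residue m i - k j can be placed in [0, w j]. For w = 1/3 versus w = 2/5 the extra room
  is useless: in the coprime case let t be the inverse of -k modulo i. If t \<ge> 3, the point at
  height t already has residue 1 \<le> t / 3; if t \<in> {1, 2}, any residue r \<le> 2 j / 5 at height j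
  would make j - t r a multiple of i strictly between 0 and i. If gcd(k, i) > 1, the left edge
  itself contains a lattice point below the top.\<close>

lemma mem_convex_hull_apex_triangle:
  fixes a w h x y :: real
  assumes w: "w > 0" and h: "h > 0"
  shows "(x, y) \<in> convex hull {(0, 0), (a, h), (a + w, h)} \<longleftrightarrow>
         0 \<le> y \<and> y \<le> h \<and> a * y \<le> x * h \<and> x * h \<le> (a + w) * y"
proof
  assume "(x, y) \<in> convex hull {(0, 0), (a, h), (a + w, h)}"
  then obtain s v u where suv: "0 \<le> s" "0 \<le> v" "0 \<le> u" "s + v + u = 1"
    and xy: "(x, y) = s *\<^sub>R (0, 0) + v *\<^sub>R (a, h) + u *\<^sub>R (a + w, h)"
    unfolding convex_hull_3 by blast
  have x: "x = (v + u) * a + u * w" and y: "y = (v + u) * h"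
    using xy by (auto simp: algebra_simps)
  have "x * h - a * y = u * w * h" "(a + w) * y - x * h = v * w * h"
    unfolding x y by (simp_all add: algebra_simps)
  moreover have "y \<le> h"
    unfolding y using suv h by (simp add: mult_left_le_one_le)
  moreover have "0 \<le> u * w * h" "0 \<le> v * w * h" "0 \<le> y"
    unfolding y using suv w h by simp_all
  ultimately show "0 \<le> y \<and> y \<le> h \<and> a * y \<le> x * h \<and> x * h \<le> (a + w) * y"
    by linarith
next
  assume "0 \<le> y \<and> y \<le> h \<and> a * y \<le> x * h \<and> x * h \<le> (a + w) * y"
  then have y: "0 \<le> y" "y \<le> h" and lo: "0 \<le> x * h - a * y" and hi: "x * h - a * y \<le> w * y"
    by (simp_all add: algebra_simps)
  define u where "u = (x * h - a * y) / (w * h)"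
  define v where "v = y / h - u"
  have "0 \<le> u" unfolding u_def using lo w h by simp
  moreover have "0 \<le> v"
    using hi w h unfolding v_def u_def by (simp add: field_simps mult.commute)
  moreover have "u + v \<le> 1" unfolding v_def using y h by simp
  moreover have "(x, y) = (1 - u - v) *\<^sub>R (0, 0) + v *\<^sub>R (a, h) + u *\<^sub>R (a + w, h)"
    using w h unfolding v_def u_def by (simp add: field_simps)
  ultimately show "(x, y) \<in> convex hull {(0, 0), (a, h), (a + w, h)}"
    unfolding convex_hull_3 by (intro CollectI exI[of _ "1 - u - v"] exI[of _ v] exI[of _ u]) auto
qed

definition lattice_point_below_top :: "int \<Rightarrow> int \<Rightarrow> real \<Rightarrow> bool" where
  "lattice_point_below_top k i w \<longleftrightarrow>
     (\<exists>m j. 0 < j \<and> j < i \<and> 0 \<le> m * i - k * j \<and> of_int (m * i - k * j) \<le> w * j)"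

lemma canonical_iff_no_lattice_point_below_top:
  fixes k i :: int and a b :: rat and w :: real
  assumes i: "i > 1" and w: "w > 0"
    and a: "(of_rat a :: real) = of_int k" and b: "of_rat b = of_int k + w"
  shows "canonical a b i \<longleftrightarrow> \<not> lattice_point_below_top k i w"
proof -
  define T :: "(real \<times> real) set" where "T = convex hull {(0, 0), (of_rat a, of_int i), (of_rat b, of_int i)}"
  have ip: "real_of_int i > 0" using i by simp
  have mem: "(of_int m, of_int j) \<in> T
      \<longleftrightarrow> 0 \<le> j \<and> j \<le> i \<and> 0 \<le> m * i - k * j \<and> of_int (m * i - k * j) \<le> w * j" for m j
    unfolding T_def a b mem_convex_hull_apex_triangle[OF w ip]
    by (auto simp: algebra_simps simp flip: of_int_mult of_int_diff of_int_le_iff)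
  have off_apex: "(m, j) \<noteq> (0, 0) \<longleftrightarrow> 0 < j" if "(of_int m, of_int j) \<in> T" for m j
  proof -
    have "m = 0" if "j = 0" using \<open>(of_int m, of_int j) \<in> T\<close> that i unfolding mem
      by (simp flip: of_int_mult add: zero_le_mult_iff mult_le_0_iff)
    then show ?thesis using \<open>(of_int m, of_int j) \<in> T\<close> unfolding mem by (cases "j = 0") auto
  qed
  have "canonical a b i \<longleftrightarrow> (\<forall>m j. (of_int m, of_int j) \<in> T \<and> (m, j) \<noteq> (0, 0) \<longrightarrow> j = i)"
    unfolding canonical_def lattice_point_def T_def[symmetric]
  proof (intro iffI allI impI ballI)
    fix m j
    assume "\<forall>p \<in> T. (fst p \<in> \<int> \<and> snd p \<in> \<int>) \<and> p \<noteq> (0, 0) \<longrightarrow> snd p = of_int i"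
      and "(of_int m, of_int j) \<in> T \<and> (m, j) \<noteq> (0, 0)"
    then show "j = i" by (auto dest!: bspec[of _ _ "(of_int m, of_int j)"])
  next
    fix p
    assume "\<forall>m j. (of_int m, of_int j) \<in> T \<and> (m, j) \<noteq> (0, 0) \<longrightarrow> j = i"
      and "p \<in> T" and "(fst p \<in> \<int> \<and> snd p \<in> \<int>) \<and> p \<noteq> (0, 0)"
    moreover obtain m j where "p = (of_int m, of_int j)"
      using \<open>(fst p \<in> \<int> \<and> snd p \<in> \<int>) \<and> p \<noteq> (0, 0)\<close> by (metis Ints_cases prod.collapse)
    ultimately show "snd p = of_int i" by auto
  qed
  also have "\<dots> \<longleftrightarrow> (\<forall>m j. (of_int m, of_int j) \<in> T \<and> 0 < j \<longrightarrow> j = i)"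
    using off_apex by blast
  also have "\<dots> \<longleftrightarrow> \<not> lattice_point_below_top k i w"
    unfolding mem lattice_point_below_top_def by (blast dest: order.strict_implies_order intro: le_neq_trans)
  finally show ?thesis .
qed

lemma lattice_point_below_top_mono:
  "lattice_point_below_top k i v \<Longrightarrow> v \<le> w \<Longrightarrow> lattice_point_below_top k i w"
  unfolding lattice_point_below_top_def
  by (meson mult_right_mono of_int_0_le_iff order.strict_implies_order order_trans)

lemma lattice_point_below_top_if_not_coprime:
  fixes k i :: int
  assumes i: "i > 1" and w: "w \<ge> 0" and "\<not> coprime k i"
  shows "lattice_point_below_top k i w"
proof -
  define g where "g = gcd k i"
  have "g \<noteq> 1" "g > 0" using assms unfolding g_def by (auto simp: coprime_iff_gcd_eq_1)
  then have g: "g > 1" by linarith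
  obtain c where i_eq: "i = g * c" unfolding g_def by (meson gcd_dvd2 dvdE)
  obtain d where k_eq: "k = g * d" unfolding g_def by (meson gcd_dvd1 dvdE)
  have "0 < c" using i g i_eq by (metis zero_less_mult_pos order.strict_trans zero_less_one)
  then have "c < i" using g i_eq by simp
  moreover have "d * i - k * c = 0" using i_eq k_eq by simp
  ultimately show ?thesis
    unfolding lattice_point_below_top_def using w \<open>0 < c\<close> by (intro exI[of _ d] exI[of _ c]) simp
qed

lemma residue_gap_not_multiple:
  fixes k i m j t :: int
  assumes "i dvd t * k + 1" and "0 < j - t * (m * i - k * j)" and "j - t * (m * i - k * j) < i"
  shows False
proof -
  obtain n where "t * k + 1 = i * n" using assms(1) by blast
  then have "j - t * (m * i - k * j) = i * (n * j - t * m)" by algebra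
  then show False using assms(2,3) by (metis dvd_triv_left zdvd_imp_le not_le)
qed

lemma coprime_ex_neg_inverse_mod:
  fixes k i :: int
  assumes "coprime k i" and "i > 0"
  shows "\<exists>t. 0 \<le> t \<and> t < i \<and> i dvd t * k + 1"
proof -
  obtain u v where uv: "u * k + v * i = 1" using bezout_int[of k i] assms(1) by auto
  have "(- u) mod i * k + 1 = i * (v - k * (- u div i))"
    using uv unfolding minus_div_mult_eq_mod[symmetric] by algebra
  then show ?thesis using assms(2) by (intro exI[of _ "(- u) mod i"]) (auto intro: dvdI)
qed

lemma lattice_point_below_top_two_fifths_imp_one_third:
  fixes k i :: int
  assumes i: "i > 1" and "lattice_point_below_top k i (2/5)"
  shows "lattice_point_below_top k i (1/3)"
proof (cases "coprime k i")
  case False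
  then show ?thesis using lattice_point_below_top_if_not_coprime i by simp
next
  case True
  obtain m j where j: "0 < j" "j < i" and r: "0 \<le> m * i - k * j" "of_int (m * i - k * j) \<le> 2/5 * j"
    using assms(2) unfolding lattice_point_below_top_def by blast
  have "of_int (5 * (m * i - k * j)) \<le> (of_int (2 * j) :: real)" using r(2) by simp
  then have r5: "5 * (m * i - k * j) \<le> 2 * j" by (simp only: of_int_le_iff)
  obtain t where t: "0 \<le> t" "t < i" and inv: "i dvd t * k + 1"
    using coprime_ex_neg_inverse_mod[OF True] i by auto
  consider "t = 0" | "t = 1 \<or> t = 2" | "t \<ge> 3" using t by linarith
  then show ?thesis
  proof cases
    case 1
    then show ?thesis using inv i by simp
  next
    case 2
    then have "0 < j - t * (m * i - k * j) \<and> j - t * (m * i - k * j) < i"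
      using j r(1) r5 by (elim disjE) simp_all
    then show ?thesis using residue_gap_not_multiple[OF inv] by blast
  next
    case 3
    obtain n where "t * k + 1 = i * n" using inv by blast
    then have "n * i - k * t = 1" by (simp add: algebra_simps)
    then show ?thesis
      unfolding lattice_point_below_top_def using 3 t by (intro exI[of _ n] exI[of _ t]) auto
  qed
qed

theorem mainTheorem12:
  fixes k i :: int
  assumes "i > 1"
  shows "canonical (of_int k) (of_int k + 2/5) i \<longleftrightarrow> canonical (of_int k) (of_int k + 1/3) i"
proof -
  have "canonical (of_int k) (of_int k + 2/5) i \<longleftrightarrow> \<not> lattice_point_below_top k i (2/5)"
    by (rule canonical_iff_no_lattice_point_below_top) (use assms in \<open>simp_all add: of_rat_add of_rat_divide\<close>)
  moreover have "canonical (of_int k) (of_int k + 1/3) i \<longleftrightarrow> \<not> lattice_point_below_top k i (1/3)"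
    by (rule canonical_iff_no_lattice_point_below_top) (use assms in \<open>simp_all add: of_rat_add of_rat_divide\<close>)
  moreover have "lattice_point_below_top k i (2/5) \<longleftrightarrow> lattice_point_below_top k i (1/3)"
    using lattice_point_below_top_two_fifths_imp_one_third lattice_point_below_top_mono assms by force
  ultimately show ?thesis by simp
qed

end
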